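(* Let $f,g:\mathbb{R}^{N}\rightarrow [-\infty ,\infty ]$ be Borel measurable with $g\geq 0$, $f\not\equiv\infty$ and $g\not\equiv\infty$. Let $f_+:=\max\{f,0\}$, $m_{f_+}:=\inf f_+$, $m_g:=\inf g$ and $m_{f_{+},g}:=(m_{f_{+}}-m_{g})/2$. Then $f\veebar g\geq 0$ and $$\|(f\veebar g)^{-1}\|_{\phi }\leq 2^{N}\left(\|(\check{f}_{+}-m_{f_{+},g})^{-1}\|_{\phi }+\|(\check{g}+m_{f_{+},g})^{-1}\|_{\phi }\right)$$ for every Young function $\phi$, where $\check f_+:=(\check f)_+$.
   Context: $(f\veebar g)(x):=\inf_{y}\max\{f(x-y),g(y)\}$. For $h\ge0$, $h^{-1}:=1/h$ (with $1/0=\infty$, $1/\infty=0$). A Young function is a nonconstant $\phi:[0,\infty]\to[0,\infty]$ with $\phi(0)=0$, nondecreasing, convex and left continuous; $\|h\|_{\phi}:=\inf\{r>0:\int_{\mathbb{R}^N}\phi(r^{-1}|h|)\le 1\}$ ($=\infty$ if no such $r$). Enclosing balls: for nonempty bounded $X\subset\mathbb{R}^N$, $\overline{B}_X$ is the unique closed ball of minimal diameter containing $X$; $\overline{B}_X:=\mathbb{R}^N$ if $X$ unbounded; $\overline{B}_\emptyset:=\{0\}$. For $f:\mathbb{R}^N\to[-\infty,\infty]$ and $\xi\in[-\infty,\infty]$, $\rho^-_f(\xi)\in[0,\infty]$ is the radius of $\overline{B}_{\{f<\xi\}}$, $\gamma^-_f(t):=\sup\{\xi:\rho^-_f(\xi)\le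 t\}$ for $t\ge0$, and $\check f(x):=\gamma^-_f(|x|)$. *)

theory Defs
  imports "HOL-Analysis.Analysis"
begin

definition supconv :: "('a::euclidean_space \<Rightarrow> ereal) \<Rightarrow> ('a \<Rightarrow> ereal) \<Rightarrow> 'a \<Rightarrow> ereal" where
  "supconv f g x = (INF y. max (f (x - y)) (g y))"

text \<open>h^{-1} = 1/h for h \<ge> 0, with 1/0 = \<infinity>, 1/\<infinity> = 0 (only used on nonnegative h).\<close>
definition hinv :: "ereal \<Rightarrow> ennreal" where
  "hinv h = inverse (e2ennreal h)"

definition young :: "(ennreal \<Rightarrow> ennreal) \<Rightarrow> bool" where
  "young \<phi> \<longleftrightarrow> (\<exists>x y. \<phi> x \<noteq> \<phi> y) \<and> \<phi> 0 = 0 \<and> mono \<phi>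
     \<and> (\<forall>x y (l::real). 0 \<le> l \<and> l \<le> 1 \<longrightarrow>
          \<phi> (ennreal l * x + ennreal (1 - l) * y) \<le> ennreal l * \<phi> x + ennreal (1 - l) * \<phi> y)
     \<and> (\<forall>x. 0 < x \<longrightarrow> (\<phi> \<longlongrightarrow> \<phi> x) (at_left x))"

text \<open>Luxemburg (Orlicz) norm w.r.t. Lebesgue measure on R^N; Inf {} = \<infinity>.\<close>
definition orlicz_norm :: "(ennreal \<Rightarrow> ennreal) \<Rightarrow> ('a::euclidean_space \<Rightarrow> ennreal) \<Rightarrow> ennreal" where
  "orlicz_norm \<phi> h = Inf {ennreal r | r. r > 0 \<and>
      (\<integral>\<^sup>+ x. \<phi> (ennreal (1 / r) * h x) \<partial>lebesgue) \<le> 1}"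

definition encl_radius :: "'a::euclidean_space set \<Rightarrow> ennreal" where
  "encl_radius X = (if X = {} then 0 else if \<not> bounded X then \<infinity>
      else ennreal (THE r. (\<exists>c. X \<subseteq> cball c r) \<and> (\<forall>c' r'. X \<subseteq> cball c' r' \<longrightarrow> r \<le> r')))"

definition rho_minus :: "('a::euclidean_space \<Rightarrow> ereal) \<Rightarrow> ereal \<Rightarrow> ennreal" where
  "rho_minus f \<xi> = encl_radius {x. f x < \<xi>}"

definition gamma_minus :: "('a::euclidean_space \<Rightarrow> ereal) \<Rightarrow> real \<Rightarrow> ereal" where
  "gamma_minus f t = Sup {\<xi>. rho_minus f \<xi> \<le> ennreal t}"

definition check :: "('a::euclidean_space \<Rightarrow> ereal) \<Rightarrow> 'a \<Rightarrow> ereal" where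
  "check f x = gamma_minus f (norm x)"

end

theory Submission
  imports Defs
begin

text \<open>Where the sup-inf convolution is below a level \<open>\<xi>\<close>, the point is a sum \<open>x + y\<close> with
  \<open>f x < \<xi>\<close> and \<open>g y < \<xi>\<close>, so this sublevel set lies in a ball of radius \<open>a + b\<close>, the sum
  of the circumradii of the sublevel sets of \<open>f\<close> and \<open>g\<close>. The balls of radii \<open>a\<close> and \<open>b\<close>
  about the origin lie in the corresponding sublevel sets of the radial functions \<open>check f\<close>
  and \<open>check g\<close>, so \<open>(a + b)^N \<le> 2^(N-1) (a^N + b^N)\<close> compares the measures of the sublevel
  sets, the shift by \<open>m\<close> costing a factor \<open>3/2\<close> in the level. Superlevel sets of \<open>\<phi>(1/(r h))\<close>
  are sublevel sets of \<open>h\<close>, so the layer cake formula turns this into an inequality between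
  modulars, and convexity of \<open>\<phi>\<close> into the norm inequality with constant \<open>3 * 2^(N-2) \<le> 2^N\<close>.\<close>

section \<open>Minimal enclosing balls\<close>

definition circumradius :: "'a::euclidean_space set \<Rightarrow> real" where
  "circumradius X = Inf {r. \<exists>c. X \<subseteq> cball c r}"

lemma bdd_below_cball_radii:
  assumes "X \<noteq> {}" shows "bdd_below {r. \<exists>c. X \<subseteq> cball c r}"
proof
  fix r assume "r \<in> {r. \<exists>c. X \<subseteq> cball c r}"
  then obtain c where "X \<subseteq> cball c r" by blast
  with assms obtain x where "dist c x \<le> r" by (auto simp: subset_iff)
  then show "0 \<le> r" using zero_le_dist[of c x] by linarith
qed

lemma circumradius_le:
  assumes "X \<noteq> {}" "X \<subseteq> cball c r" shows "circumradius X \<le> r"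
  unfolding circumradius_def using assms by (intro cInf_lower bdd_below_cball_radii) auto

lemma circumradius_attained:
  assumes "X \<noteq> {}" "bounded X"
  obtains c where "X \<subseteq> cball c (circumradius X)"
proof -
  obtain x0 where x0: "x0 \<in> X" using assms by auto
  define centres where "centres r = (\<Inter>x\<in>X. cball x r)" for r
  have centres_iff: "c \<in> centres r \<longleftrightarrow> X \<subseteq> cball c r" for c r
    by (auto simp: centres_def dist_commute subset_iff)
  have covering: "\<exists>c. X \<subseteq> cball c r" if "circumradius X < r" for r
  proof -
    have "{r. \<exists>c. X \<subseteq> cball c r} \<noteq> {}" using assms(2) by (auto simp: bounded_subset_cball)
    with that obtain r' c where "X \<subseteq> cball c r'" "r' < r"
      using cInf_less_iff[OF _ bdd_below_cball_radii[OF assms(1)]] unfolding circumradius_def by auto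
    then show ?thesis by (meson cball_subset_cball_iff less_imp_le order_refl order_trans)
  qed
  text \<open>Centres of covering balls of radius slightly above the infimum stay in a fixed compact
    ball, so by the finite intersection property one centre serves for all radii.\<close>
  have "cball x0 (circumradius X + 1) \<inter> \<Inter>(centres ` {r. circumradius X < r}) \<noteq> {}"
  proof (rule compact_imp_fip_image)
    show "closed (centres r)" for r by (simp add: centres_def closed_INT)
    fix I assume I: "finite I" "I \<subseteq> {r. circumradius X < r}"
    define r0 where "r0 = Min (insert (circumradius X + 1) I)"
    have "circumradius X < r0" using I by (auto simp: r0_def)
    then obtain c where c: "X \<subseteq> cball c r0" using covering by blast
    have "r0 \<le> r" if "r \<in> I" for r using I that by (simp add: r0_def)
    moreover have "r0 \<le> circumradius X + 1" using I by (simp add: r0_def)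
    ultimately have "c \<in> cball x0 (circumradius X + 1)" "\<And>r. r \<in> I \<Longrightarrow> c \<in> centres r"
      using c x0 by (auto simp: centres_iff dist_commute subset_iff intro: order_trans)
    then show "cball x0 (circumradius X + 1) \<inter> \<Inter> (centres ` I) \<noteq> {}" by blast
  qed simp
  then obtain c where c: "\<And>r. circumradius X < r \<Longrightarrow> X \<subseteq> cball c r"
    by (force simp: centres_iff)
  have "X \<subseteq> cball c (circumradius X)"
  proof
    fix x assume "x \<in> X"
    then have "dist c x \<le> r" if "circumradius X < r" for r using c[OF that] by auto
    then show "x \<in> cball c (circumradius X)" by (auto intro: dense_ge)
  qed
  then show thesis ..
qed

lemma circumradius_nonneg:
  assumes "X \<noteq> {}" "bounded X" shows "0 \<le> circumradius X"
proof -
  obtain c where "X \<subseteq> cball c (circumradius X)" using circumradius_attained[OF assms] .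
  with assms obtain x where "dist c x \<le> circumradius X" by (auto simp: subset_iff)
  then show ?thesis using zero_le_dist[of c x] by linarith
qed

lemma encl_radius_eq_circumradius:
  assumes "X \<noteq> {}" "bounded X"
  shows "encl_radius X = ennreal (circumradius X)"
proof -
  have "(THE r. (\<exists>c. X \<subseteq> cball c r) \<and> (\<forall>c' r'. X \<subseteq> cball c' r' \<longrightarrow> r \<le> r')) = circumradius X"
    using circumradius_attained[OF assms] circumradius_le[OF assms(1)]
    by (intro the_equality) (blast, meson order_antisym)
  then show ?thesis using assms by (simp add: encl_radius_def)
qed

lemma encl_radius_mono:
  assumes "X \<subseteq> Y" shows "encl_radius X \<le> encl_radius Y"
proof (cases "X = {} \<or> \<not> bounded Y")
  case True then show ?thesis using assms by (auto simp: encl_radius_def)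
next
  case False
  then have "X \<noteq> {}" "Y \<noteq> {}" "bounded X" "bounded Y" using assms bounded_subset by auto
  obtain c where "Y \<subseteq> cball c (circumradius Y)"
    using circumradius_attained \<open>Y \<noteq> {}\<close> \<open>bounded Y\<close> by blast
  with \<open>X \<noteq> {}\<close> assms have "circumradius X \<le> circumradius Y" by (intro circumradius_le) auto
  with \<open>X \<noteq> {}\<close> \<open>Y \<noteq> {}\<close> \<open>bounded X\<close> \<open>bounded Y\<close> show ?thesis
    by (simp add: encl_radius_eq_circumradius ennreal_leI)
qed

section \<open>Monotone maps and the radial rearrangement\<close>

lemma down_closed_in_borel:
  fixes D :: "'a::{conditionally_complete_linorder, linorder_topology} set"
  assumes down: "\<And>a b. b \<in> D \<Longrightarrow> a \<le> b \<Longrightarrow> a \<in> D"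
  shows "D \<in> sets borel"
proof -
  consider "D = {}" | "\<not> bdd_above D" | "bdd_above D" "Sup D \<in> D" | "D \<noteq> {}" "bdd_above D" "Sup D \<notin> D"
    by blast
  then show ?thesis
  proof cases
    case 2
    have "x \<in> D" for x
    proof -
      obtain b where "b \<in> D" "x \<le> b" using 2 by (auto simp: bdd_above_def not_le intro: less_imp_le)
      then show "x \<in> D" by (rule down)
    qed
    then have "D = UNIV" by blast
    then show ?thesis by simp
  next
    case 3
    then have "D = {..Sup D}" using down by (auto intro: cSup_upper)
    then show ?thesis using atMost_borel by metis
  next
    case 4
    have "D = {..<Sup D}"
    proof (intro equalityI subsetI)
      fix x assume "x \<in> D"
      with 4 show "x \<in> {..<Sup D}" using cSup_upper[of x D] by (cases "x = Sup D") auto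
    next
      fix x assume "x \<in> {..<Sup D}"
      with 4 obtain b where "b \<in> D" "x \<le> b" by (auto simp: less_cSup_iff intro: less_imp_le)
      then show "x \<in> D" by (rule down)
    qed
    then show ?thesis using lessThan_borel by metis
  qed simp
qed

lemma borel_measurable_mono_linorder:
  fixes f :: "'a::{conditionally_complete_linorder, linorder_topology} \<Rightarrow>
      'b::{linorder_topology, second_countable_topology}"
  assumes "mono f" shows "f \<in> borel_measurable borel"
proof (rule borel_measurableI_less)
  fix y
  have "{x. f x < y} \<in> sets borel"
    using assms by (intro down_closed_in_borel) (auto dest: monoD)
  then show "{x \<in> space borel. f x < y} \<in> sets borel" by simp
qed

lemma gamma_minus_mono: "mono (gamma_minus f)"
proof (rule monoI)
  fix s t :: real assume "s \<le> t"
  then have "{\<xi>. rho_minus f \<xi> \<le> ennreal s} \<subseteq> {\<xi>. rho_minus f \<xi> \<le> ennreal t}"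
    using ennreal_leI order_trans by blast
  then show "gamma_minus f s \<le> gamma_minus f t" unfolding gamma_minus_def by (rule Sup_subset_mono)
qed

lemma check_measurable[measurable]: "check f \<in> borel_measurable borel"
proof -
  have "gamma_minus f \<in> borel_measurable borel"
    by (rule borel_measurable_mono_linorder[OF gamma_minus_mono])
  then show ?thesis unfolding check_def[abs_def] by measurable
qed

lemma gamma_minus_le:
  assumes "ennreal t < rho_minus f \<xi>"
  shows "gamma_minus f t \<le> \<xi>"
  unfolding gamma_minus_def
proof (rule Sup_least)
  fix \<eta> assume "\<eta> \<in> {\<xi>. rho_minus f \<xi> \<le> ennreal t}"
  then have "\<not> rho_minus f \<xi> \<le> rho_minus f \<eta>" using assms by auto
  moreover have "rho_minus f \<xi> \<le> rho_minus f \<eta>" if "\<xi> < \<eta>"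
    unfolding rho_minus_def using that by (intro encl_radius_mono) auto
  ultimately show "\<eta> \<le> \<xi>" by (meson not_le)
qed

lemma INF_le_check: "(INF x. f x) \<le> check f z"
proof -
  have "{x. f x < (INF x. f x)} = {}" by (auto simp: not_less intro: INF_lower)
  then have "rho_minus f (INF x. f x) \<le> ennreal (norm z)"
    by (simp add: rho_minus_def encl_radius_def)
  then show ?thesis unfolding check_def gamma_minus_def by (intro Sup_upper) simp
qed

section \<open>Layer cake representation\<close>

lemma emeasure_lborel_nonneg_below:
  "emeasure lborel {t::real. 0 \<le> t \<and> ennreal t < a} = a"
proof (cases a)
  case (real r)
  then have "{t::real. 0 \<le> t \<and> ennreal t < a} = {0..<r}" by (auto simp: ennreal_less_iff)
  then show ?thesis using real by simp
next
  case top
  have "emeasure lborel {0::real..} = \<infinity>"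
  proof (rule ccontr)
    assume "emeasure lborel {0::real..} \<noteq> \<infinity>"
    then obtain c where c: "emeasure lborel {0::real..} = ennreal c" "0 \<le> c"
      by (cases "emeasure lborel {0::real..}") auto
    have "ennreal (c + 1) = emeasure lborel {0..<c + 1}" using c by simp
    also have "\<dots> \<le> emeasure lborel {0::real..}" by (intro emeasure_mono) auto
    finally show False using c by (simp add: ennreal_le_iff)
  qed
  moreover have "{t::real. 0 \<le> t \<and> ennreal t < a} = {0..}" using top by auto
  ultimately show ?thesis using top by simp
qed

context sigma_finite_measure
begin

lemma nn_integral_layer_cake:
  assumes [measurable]: "s \<in> borel_measurable M"
  shows "(\<integral>\<^sup>+x. s x \<partial>M) =
    (\<integral>\<^sup>+t. indicator {0..} t * emeasure M {x \<in> space M. ennreal t < s x} \<partial>lborel)"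
proof -
  interpret pair_sigma_finite M "lborel :: real measure" ..
  define F :: "_ \<Rightarrow> ennreal" where
    "F p = indicator {p. 0 \<le> snd p \<and> ennreal (snd p) < s (fst p)} p" for p
  have [measurable]: "F \<in> borel_measurable (M \<Otimes>\<^sub>M lborel)" unfolding F_def by measurable
  have "(\<integral>\<^sup>+x. s x \<partial>M) = (\<integral>\<^sup>+x. \<integral>\<^sup>+t. F (x, t) \<partial>lborel \<partial>M)"
  proof (intro nn_integral_cong)
    fix x
    have "(\<integral>\<^sup>+t. F (x, t) \<partial>lborel) = (\<integral>\<^sup>+t. indicator {t::real. 0 \<le> t \<and> ennreal t < s x} t \<partial>lborel)"
      unfolding F_def by (intro nn_integral_cong) (auto split: split_indicator)
    also have "\<dots> = emeasure lborel {t::real. 0 \<le> t \<and> ennreal t < s x}"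
      by (intro nn_integral_indicator) measurable
    finally show "s x = (\<integral>\<^sup>+t. F (x, t) \<partial>lborel)" by (simp add: emeasure_lborel_nonneg_below)
  qed
  also have "\<dots> = (\<integral>\<^sup>+t. \<integral>\<^sup>+x. F (x, t) \<partial>M \<partial>lborel)"
    by (rule Fubini[symmetric]) measurable
  also have "\<dots> = (\<integral>\<^sup>+t. indicator {0..} t * emeasure M {x \<in> space M. ennreal t < s x} \<partial>lborel)"
  proof (intro nn_integral_cong)
    fix t :: real
    have "(\<integral>\<^sup>+x. F (x, t) \<partial>M) = (\<integral>\<^sup>+x. indicator {0..} t * indicator {x \<in> space M. ennreal t < s x} x \<partial>M)"
      unfolding F_def by (intro nn_integral_cong) (auto split: split_indicator)
    then show "(\<integral>\<^sup>+x. F (x, t) \<partial>M) = indicator {0..} t * emeasure M {x \<in> space M. ennreal t < s x}"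
      by (simp add: nn_integral_cmult_indicator)
  qed
  finally show ?thesis .
qed

lemma measurable_emeasure_superlevel:
  assumes [measurable]: "s \<in> borel_measurable M"
  shows "(\<lambda>t::real. emeasure M {x \<in> space M. ennreal t < s x}) \<in> borel_measurable borel"
proof -
  have "{p \<in> space (lborel \<Otimes>\<^sub>M M). ennreal (fst p) < s (snd p)} \<in> sets (lborel \<Otimes>\<^sub>M M)"
    by measurable
  from measurable_emeasure_Pair[OF this] show ?thesis
    by (simp add: space_pair_measure vimage_def conj_commute cong: conj_cong)
qed

text \<open>No measurability of \<open>W\<close> is needed: its integral is approximated from below by simple
  functions, to which the layer cake formula applies.\<close>
lemma nn_integral_le_of_superlevel_bound:
  assumes P[measurable]: "P \<in> borel_measurable M" and Q[measurable]: "Q \<in> borel_measurable M"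
  assumes superlevel: "\<And>t S. 0 \<le> t \<Longrightarrow> S \<in> sets M \<Longrightarrow> S \<subseteq> {x \<in> space M. ennreal t < W x} \<Longrightarrow>
     emeasure M S \<le> C * (emeasure M {x \<in> space M. ennreal t < P x} + emeasure M {x \<in> space M. ennreal t < Q x})"
  shows "(\<integral>\<^sup>+x. W x \<partial>M) \<le> C * ((\<integral>\<^sup>+x. P x \<partial>M) + (\<integral>\<^sup>+x. Q x \<partial>M))"
proof -
  let ?level = "\<lambda>h (t::real). indicator {0..} t * emeasure M {x \<in> space M. ennreal t < h x}"
  have [measurable]: "?level P \<in> borel_measurable lborel" "?level Q \<in> borel_measurable lborel"
    using measurable_emeasure_superlevel[OF P] measurable_emeasure_superlevel[OF Q] by measurable
  have "(\<integral>\<^sup>+x. s x \<partial>M) \<le> C * ((\<integral>\<^sup>+x. P x \<partial>M) + (\<integral>\<^sup>+x. Q x \<partial>M))"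
    if s: "simple_function M s" "s \<le> W" for s
  proof -
    have [measurable]: "s \<in> borel_measurable M" using s(1) by (rule borel_measurable_simple_function)
    have "?level s t \<le> C * (?level P t + ?level Q t)" for t
    proof (cases "0 \<le> t")
      case True
      have "{x \<in> space M. ennreal t < s x} \<subseteq> {x \<in> space M. ennreal t < W x}"
        using s(2) by (auto simp: le_fun_def intro: less_le_trans)
      with True show ?thesis by (simp add: superlevel)
    qed simp
    then have "(\<integral>\<^sup>+t. ?level s t \<partial>lborel) \<le> (\<integral>\<^sup>+t. C * (?level P t + ?level Q t) \<partial>lborel)"
      by (intro nn_integral_mono) simp
    also have "\<dots> = C * ((\<integral>\<^sup>+t. ?level P t \<partial>lborel) + (\<integral>\<^sup>+t. ?level Q t \<partial>lborel))"
      by (simp add: nn_integral_cmult nn_integral_add)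
    finally show ?thesis by (simp add: nn_integral_layer_cake)
  qed
  then show ?thesis
    unfolding nn_integral_def[of M W]
    by (intro SUP_least) (auto simp: nn_integral_eq_simple_integral[symmetric])
qed

end

section \<open>Sublevel sets of the sup-inf convolution\<close>

lemma supconv_less_iff: "supconv f g x < e \<longleftrightarrow> (\<exists>y. f (x - y) < e \<and> g y < e)"
  unfolding supconv_def by (simp add: INF_less_iff)

lemma supconv_nonneg: "(\<And>y. 0 \<le> g y) \<Longrightarrow> 0 \<le> supconv f g x"
  unfolding supconv_def by (rule INF_greatest) (meson max.coboundedI2)

lemma INF_le_supconv:
  assumes "\<And>y. 0 \<le> g y"
  shows "max (INF x. max (f x) 0) (INF x. g x) \<le> supconv f g x"
  unfolding supconv_def
proof (rule INF_greatest)
  fix y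
  have "max (f (x - y)) (g y) = max (max (f (x - y)) 0) (g y)" using assms[of y] by (auto simp: max_def)
  then show "max (INF x. max (f x) 0) (INF x. g x) \<le> max (f (x - y)) (g y)"
    by (metis INF_lower UNIV_I max.mono)
qed

lemma sublevel_supconv_subset:
  "{x. supconv f g x < e} \<subseteq> {x + y | x y. x \<in> {x. f x < e} \<and> y \<in> {y. g y < e}}"
  by (auto simp: supconv_less_iff) (metis diff_add_cancel)

lemma power_add_le_two_power:
  fixes a b :: real
  assumes "0 \<le> a" "0 \<le> b" "1 \<le> n"
  shows "(a + b) ^ n \<le> 2 ^ (n - 1) * (a ^ n + b ^ n)"
  using assms(3)
proof (induction n rule: dec_induct)
  case (step n)
  have "0 \<le> (a - b) * (a ^ n - b ^ n)"
  proof (cases "a \<le> b")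
    case True
    then have "a ^ n \<le> b ^ n" using assms by (simp add: power_mono)
    with True show ?thesis by (simp add: mult_nonpos_nonpos)
  next
    case False
    then have "b ^ n \<le> a ^ n" using assms by (simp add: power_mono)
    with False show ?thesis by simp
  qed
  then have chebyshev: "(a + b) * (a ^ n + b ^ n) \<le> 2 * (a ^ Suc n + b ^ Suc n)"
    by (simp add: algebra_simps)
  have "(a + b) ^ Suc n \<le> (a + b) * (2 ^ (n - 1) * (a ^ n + b ^ n))"
    using step.IH assms by (simp add: mult_left_mono)
  also have "\<dots> \<le> 2 ^ (n - 1) * (2 * (a ^ Suc n + b ^ Suc n))"
    using chebyshev by (simp add: mult.left_commute)
  also have "\<dots> = 2 ^ (Suc n - 1) * (a ^ Suc n + b ^ Suc n)"
    using step.hyps by (cases n) auto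
  finally show ?case .
qed simp

lemma ennreal_two_power: "ennreal (2 ^ n) = 2 ^ n"
  by (simp add: ennreal_power[symmetric])

lemma emeasure_closure_le_circumradius_sum:
  fixes X Y :: "'a::euclidean_space set"
  assumes D: "D \<subseteq> {x + y | x y. x \<in> X \<and> y \<in> Y}"
    and X: "X \<noteq> {}" "bounded X" and Y: "Y \<noteq> {}" "bounded Y"
  shows "emeasure lborel (closure D) \<le> 2 ^ (DIM('a) - 1) *
    (emeasure lborel (ball (0::'a) (circumradius X)) + emeasure lborel (ball (0::'a) (circumradius Y)))"
proof -
  define a where "a = circumradius X"
  define b where "b = circumradius Y"
  define \<omega> where "\<omega> = unit_ball_vol (DIM('a))"
  obtain cX cY where cX: "X \<subseteq> cball cX a" and cY: "Y \<subseteq> cball cY b"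
    using circumradius_attained X Y unfolding a_def b_def by metis
  have ab: "0 \<le> a" "0 \<le> b" using circumradius_nonneg X Y by (auto simp: a_def b_def)
  have "D \<subseteq> cball (cX + cY) (a + b)"
  proof
    fix z assume "z \<in> D"
    then obtain x y where "z = x + y" "x \<in> X" "y \<in> Y" using D by blast
    then have "dist (cX + cY) z \<le> dist cX x + dist cY y"
      by (simp add: dist_norm add_diff_add norm_triangle_ineq)
    also have "\<dots> \<le> a + b" using \<open>x \<in> X\<close> \<open>y \<in> Y\<close> cX cY by (auto intro!: add_mono)
    finally show "z \<in> cball (cX + cY) (a + b)" by simp
  qed
  then have "emeasure lborel (closure D) \<le> emeasure lborel (cball (cX + cY) (a + b))"
    by (intro emeasure_mono closure_minimal) auto
  also have "\<dots> = ennreal (\<omega> * (a + b) ^ DIM('a))"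
    using ab by (simp add: emeasure_cball \<omega>_def)
  also have "\<dots> \<le> ennreal (2 ^ (DIM('a) - 1) * (\<omega> * a ^ DIM('a) + \<omega> * b ^ DIM('a)))"
    using power_add_le_two_power[OF ab, of "DIM('a)"]
    by (intro ennreal_leI) (simp add: \<omega>_def DIM_positive Suc_le_eq mult_left_mono distrib_left[symmetric]
        mult.left_commute[of "unit_ball_vol _"])
  also have "\<dots> = 2 ^ (DIM('a) - 1) *
      (emeasure lborel (ball (0::'a) a) + emeasure lborel (ball (0::'a) b))"
    using ab by (simp add: emeasure_ball \<omega>_def ennreal_mult ennreal_two_power)
  finally show ?thesis by (simp add: a_def b_def)
qed

lemma check_le_of_unbounded:
  assumes "\<not> bounded {x. h x < \<xi>}"
  shows "check h z \<le> \<xi>"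
proof -
  have "{x. h x < \<xi>} \<noteq> {}" using assms by auto
  with assms have "rho_minus h \<xi> = \<infinity>" by (simp add: rho_minus_def encl_radius_def)
  then show ?thesis unfolding check_def by (intro gamma_minus_le) simp
qed

lemma ball_circumradius_subset_check:
  assumes "{x. h x < \<xi>} \<noteq> {}" "bounded {x. h x < \<xi>}"
  shows "ball 0 (circumradius {x. h x < \<xi>}) \<subseteq> {z. check h z \<le> \<xi>}"
proof
  fix z :: 'a assume "z \<in> ball 0 (circumradius {x. h x < \<xi>})"
  then have "ennreal (norm z) < rho_minus h \<xi>"
    using assms by (simp add: rho_minus_def encl_radius_eq_circumradius ennreal_less_iff)
  then show "z \<in> {z. check h z \<le> \<xi>}" unfolding check_def by (simp add: gamma_minus_le)
qed

lemma emeasure_closure_sublevel_supconv_le: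
  fixes f g :: "'a::euclidean_space \<Rightarrow> ereal"
  shows "emeasure lborel (closure {x. supconv f g x < \<xi>}) \<le>
    2 ^ (DIM('a) - 1) * (emeasure lborel {x. check f x \<le> \<xi>} + emeasure lborel {x. check g x \<le> \<xi>})"
proof -
  define X where "X = {x. f x < \<xi>}"
  define Y where "Y = {y. g y < \<xi>}"
  have check_sublevels[measurable]: "{x. check f x \<le> \<xi>} \<in> sets lborel" "{x. check g x \<le> \<xi>} \<in> sets lborel"
    by measurable
  consider "X = {} \<or> Y = {}" | "\<not> bounded X \<or> \<not> bounded Y" | "X \<noteq> {}" "bounded X" "Y \<noteq> {}" "bounded Y"
    by blast
  then show ?thesis
  proof cases
    case 1
    then have "{x. supconv f g x < \<xi>} = {}" by (auto simp: X_def Y_def supconv_less_iff)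
    then show ?thesis by simp
  next
    case 2
    then have "{x. check f x \<le> \<xi>} = UNIV \<or> {x. check g x \<le> \<xi>} = UNIV"
      using check_le_of_unbounded unfolding X_def Y_def by blast
    then show ?thesis by (auto simp: ennreal_mult_top)
  next
    case 3
    have "{x. supconv f g x < \<xi>} \<subseteq> {x + y | x y. x \<in> X \<and> y \<in> Y}"
      unfolding X_def Y_def by (rule sublevel_supconv_subset)
    from emeasure_closure_le_circumradius_sum[OF this 3]
    have "emeasure lborel (closure {x. supconv f g x < \<xi>}) \<le> 2 ^ (DIM('a) - 1) *
        (emeasure lborel (ball (0::'a) (circumradius X)) + emeasure lborel (ball (0::'a) (circumradius Y)))" .
    also have "\<dots> \<le> 2 ^ (DIM('a) - 1) * (emeasure lborel {x. check f x \<le> \<xi>} + emeasure lborel {x. check g x \<le> \<xi>})"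
      using 3 unfolding X_def Y_def
      by (intro mult_left_mono add_mono emeasure_mono ball_circumradius_subset_check check_sublevels) auto
    finally show ?thesis .
  qed
qed

lemma ereal_real_incseq_approx:
  fixes \<xi> :: ereal
  assumes "ereal a < \<xi>"
  obtains s :: "nat \<Rightarrow> real" where "incseq s" "\<And>n. a < s n" "\<And>n. ereal (s n) < \<xi>"
    "\<And>e. e < \<xi> \<Longrightarrow> \<exists>n. e < ereal (s n)"
proof -
  define A where "A = {ereal r | r. a < r \<and> ereal r < \<xi>}"
  have between: "\<exists>r. y < ereal r \<and> a < r \<and> ereal r < \<xi>" if "y < \<xi>" for y
  proof -
    obtain r where "max y (ereal a) < ereal r" "ereal r < \<xi>"
      using ereal_dense2 \<open>y < \<xi>\<close> assms by (metis max_less_iff_conj)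
    then show ?thesis by auto
  qed
  then have "A \<noteq> {}" using assms by (auto simp: A_def)
  have "Sup A = \<xi>"
  proof (rule antisym)
    show "Sup A \<le> \<xi>" unfolding A_def by (rule Sup_least) auto
    show "\<xi> \<le> Sup A"
    proof (rule dense_le)
      fix y assume "y < \<xi>"
      with between obtain r where "y < ereal r" "ereal r \<in> A" by (auto simp: A_def)
      then show "y \<le> Sup A" by (meson Sup_upper less_imp_le order_trans)
    qed
  qed
  obtain f :: "nat \<Rightarrow> ereal" where f: "incseq f" "range f \<subseteq> A" "Sup A = (SUP n. f n)"
    using Sup_countable_SUP[OF \<open>A \<noteq> {}\<close>] by blast
  define s where "s n = real_of_ereal (f n)" for n
  have fs: "f n = ereal (s n)" "a < s n" "ereal (s n) < \<xi>" for n
  proof -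
    obtain r where "f n = ereal r" "a < r" "ereal r < \<xi>" using f(2) by (auto simp: A_def)
    then show "f n = ereal (s n)" "a < s n" "ereal (s n) < \<xi>" by (auto simp: s_def)
  qed
  show thesis
  proof
    show "incseq s" using f(1) by (simp add: incseq_def fs)
    show "\<exists>n. e < ereal (s n)" if "e < \<xi>" for e
      using that f(3) \<open>Sup A = \<xi>\<close> by (simp add: less_SUP_iff fs)
  qed (use fs in auto)
qed

lemma emeasure_le_of_subset_sublevel_supconv:
  fixes f g :: "'a::euclidean_space \<Rightarrow> ereal"
  assumes S: "S \<in> sets lborel" "S \<subseteq> {x. supconv f g x < \<xi>}"
    and lower: "\<And>x. ereal a \<le> supconv f g x"
    and A: "A \<in> sets lborel" "\<And>r. a < r \<Longrightarrow> ereal r < \<xi> \<Longrightarrow> {x. check f x \<le> ereal r} \<subseteq> A"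
    and B: "B \<in> sets lborel" "\<And>r. a < r \<Longrightarrow> ereal r < \<xi> \<Longrightarrow> {x. check g x \<le> ereal r} \<subseteq> B"
  shows "emeasure lborel S \<le> 2 ^ (DIM('a) - 1) * (emeasure lborel A + emeasure lborel B)"
proof (cases "ereal a < \<xi>")
  case False
  have "x \<notin> S" for x
    using S(2) lower[of x] False by (auto dest: order.strict_trans2)
  then have "S = {}" by blast
  then show ?thesis by simp
next
  case True
  obtain s where s: "incseq s" "\<And>n. a < s n" "\<And>n. ereal (s n) < \<xi>"
    "\<And>e. e < \<xi> \<Longrightarrow> \<exists>n. e < ereal (s n)"
    using ereal_real_incseq_approx[OF True] by blast
  text \<open>The sublevel sets of the sup-inf convolution need not be measurable; their closures are.\<close>
  define K where "K n = closure {x. supconv f g x < ereal (s n)}" for n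
  have K_sets: "range K \<subseteq> sets lborel" by (auto simp: K_def)
  have "incseq K"
    unfolding incseq_def K_def
  proof (intro allI impI closure_mono subsetI)
    fix i j :: nat and x assume "i \<le> j" "x \<in> {x. supconv f g x < ereal (s i)}"
    then show "x \<in> {x. supconv f g x < ereal (s j)}"
      using monoD[OF s(1) \<open>i \<le> j\<close>] by (auto intro: less_le_trans)
  qed
  have "S \<subseteq> (\<Union>n. K n)"
  proof
    fix x assume "x \<in> S"
    then obtain n where "supconv f g x < ereal (s n)" using S(2) s(4) by blast
    then have "x \<in> K n" unfolding K_def by (meson closure_subset mem_Collect_eq subsetD)
    then show "x \<in> (\<Union>n. K n)" by blast
  qed
  then have "emeasure lborel S \<le> emeasure lborel (\<Union>n. K n)"
    using K_sets by (intro emeasure_mono) auto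
  also have "\<dots> = (SUP n. emeasure lborel (K n))"
    using SUP_emeasure_incseq[OF K_sets \<open>incseq K\<close>] by simp
  also have "\<dots> \<le> 2 ^ (DIM('a) - 1) * (emeasure lborel A + emeasure lborel B)"
  proof (rule SUP_least)
    fix n
    have "emeasure lborel (K n) \<le> 2 ^ (DIM('a) - 1) *
        (emeasure lborel {x. check f x \<le> ereal (s n)} + emeasure lborel {x. check g x \<le> ereal (s n)})"
      unfolding K_def by (rule emeasure_closure_sublevel_supconv_le)
    also have "\<dots> \<le> 2 ^ (DIM('a) - 1) * (emeasure lborel A + emeasure lborel B)"
      using s(2,3) by (intro mult_left_mono add_mono emeasure_mono A B) auto
    finally show "emeasure lborel (K n) \<le> 2 ^ (DIM('a) - 1) * (emeasure lborel A + emeasure lborel B)" .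
  qed
  finally show ?thesis .
qed

section \<open>Young functions\<close>

lemma borel_measurable_young: "young \<phi> \<Longrightarrow> \<phi> \<in> borel_measurable borel"
  unfolding young_def by (blast intro: borel_measurable_mono_linorder)

text \<open>Left continuity makes the superlevel sets of a Young function open half-lines.\<close>
lemma young_superlevel_threshold:
  assumes "young \<phi>"
  obtains c where "\<And>v. t < \<phi> v \<longleftrightarrow> c < v"
proof -
  have mono: "mono \<phi>" and "\<phi> 0 = 0" and left_cont: "\<And>x. 0 < x \<Longrightarrow> (\<phi> \<longlongrightarrow> \<phi> x) (at_left x)"
    using assms unfolding young_def by auto
  define c where "c = Inf {v. t < \<phi> v}"
  have "t < \<phi> v \<longleftrightarrow> c < v" for v
  proof
    assume v: "t < \<phi> v"
    then have "c \<le> v" by (auto simp: c_def intro: Inf_lower)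
    moreover have "c \<noteq> v"
    proof
      assume "c = v"
      have "0 < v" using v \<open>\<phi> 0 = 0\<close> by (metis not_gr_zero not_less_zero)
      have "eventually (\<lambda>x. t < \<phi> x) (at_left v)"
        using order_tendstoD(1)[OF left_cont[OF \<open>0 < v\<close>] v] .
      then obtain b where "b < v" "\<And>y. b < y \<Longrightarrow> y < v \<Longrightarrow> t < \<phi> y"
        using \<open>0 < v\<close> by (auto simp: eventually_at_left)
      moreover obtain y where "b < y" "y < v" using dense[OF \<open>b < v\<close>] by blast
      ultimately have "c \<le> y" by (auto simp: c_def intro: Inf_lower)
      with \<open>y < v\<close> \<open>c = v\<close> show False by simp
    qed
    ultimately show "c < v" by simp
  next
    assume "c < v"
    then obtain v' where "t < \<phi> v'" "v' < v" by (auto simp: c_def Inf_less_iff)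
    then show "t < \<phi> v" using monoD[OF mono, of v' v] by (simp add: order_less_le_trans)
  qed
  then show thesis by (rule that)
qed

lemma young_scale_le:
  assumes "young \<phi>" "0 \<le> l" "l \<le> 1"
  shows "\<phi> (ennreal l * x) \<le> ennreal l * \<phi> x"
  using assms unfolding young_def by (metis add.right_neutral mult_zero_right)

lemma nn_integral_young_scale_le:
  assumes "young \<phi>" "0 \<le> l" "l \<le> 1" and [measurable]: "h \<in> borel_measurable M"
  shows "(\<integral>\<^sup>+x. \<phi> (ennreal l * h x) \<partial>M) \<le> ennreal l * (\<integral>\<^sup>+x. \<phi> (h x) \<partial>M)"
proof -
  have [measurable]: "\<phi> \<in> borel_measurable borel" using assms(1) by (rule borel_measurable_young)
  have "(\<integral>\<^sup>+x. \<phi> (ennreal l * h x) \<partial>M) \<le> (\<integral>\<^sup>+x. ennreal l * \<phi> (h x) \<partial>M)"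
    using assms by (intro nn_integral_mono young_scale_le)
  also have "\<dots> = ennreal l * (\<integral>\<^sup>+x. \<phi> (h x) \<partial>M)" by (rule nn_integral_cmult) measurable
  finally show ?thesis .
qed

lemma hinv_measurable[measurable]: "hinv \<in> borel_measurable borel"
  unfolding hinv_def[abs_def] by measurable

lemma ennreal_less_mult_inverse_iff:
  fixes c u :: ennreal
  assumes "0 < k"
  shows "c < ennreal k * inverse u \<longleftrightarrow> u < ennreal k * inverse c"
proof -
  have finite: "ennreal x < ennreal k * inverse (ennreal y) \<longleftrightarrow> x * y < k" if "0 < x" "0 < y" for x y
    using that assms by (simp add: inverse_ennreal ennreal_mult[symmetric] ennreal_less_iff field_simps)
  show ?thesis
  proof (cases "c = 0 \<or> u = 0 \<or> c = top \<or> u = top")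
    case True
    with assms show ?thesis
      by (auto simp: ennreal_mult_top ennreal_zero_less_mult_iff ennreal_inverse_positive top.not_eq_extremum)
  next
    case False
    then obtain x y where "c = ennreal x" "u = ennreal y" "0 < x" "0 < y"
      by (metis ennreal_cases ennreal_zero_less_top not_gr_zero ennreal_eq_0_iff not_le)
    then show ?thesis by (simp add: finite mult.commute)
  qed
qed

lemma less_mult_hinv_iff:
  assumes "0 \<le> e" "0 < a"
  shows "c < ennreal a * hinv e \<longleftrightarrow> e < ereal a * enn2ereal (inverse c)"
proof -
  have "c < ennreal a * hinv e \<longleftrightarrow> e2ennreal e < ennreal a * inverse c"
    unfolding hinv_def by (rule ennreal_less_mult_inverse_iff[OF assms(2)])
  also have "\<dots> \<longleftrightarrow> e < ereal a * enn2ereal (inverse c)"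
    using assms by (simp add: less_ennreal.rep_eq enn2ereal_e2ennreal times_ennreal.rep_eq)
  finally show ?thesis .
qed

section \<open>Luxemburg norms\<close>

lemma orlicz_norm_le:
  "0 < r \<Longrightarrow> (\<integral>\<^sup>+x. \<phi> (ennreal (1 / r) * h x) \<partial>lebesgue) \<le> 1 \<Longrightarrow> orlicz_norm \<phi> h \<le> ennreal r"
  unfolding orlicz_norm_def by (intro Inf_lower) auto

lemma orlicz_norm_le_mult_add:
  fixes U V W :: "'a::euclidean_space \<Rightarrow> ennreal" and K :: ennreal
  assumes "0 < K" "K < top"
    and bound: "\<And>r\<^sub>1 r\<^sub>2. 0 < r\<^sub>1 \<Longrightarrow> 0 < r\<^sub>2 \<Longrightarrow>
      (\<integral>\<^sup>+x. \<phi> (ennreal (1 / r\<^sub>1) * U x) \<partial>lebesgue) \<le> 1 \<Longrightarrow>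
      (\<integral>\<^sup>+x. \<phi> (ennreal (1 / r\<^sub>2) * V x) \<partial>lebesgue) \<le> 1 \<Longrightarrow>
      orlicz_norm \<phi> W \<le> K * (ennreal r\<^sub>1 + ennreal r\<^sub>2)"
  shows "orlicz_norm \<phi> W \<le> K * (orlicz_norm \<phi> U + orlicz_norm \<phi> V)"
proof -
  define radii where "radii h = {ennreal r | r. 0 < r \<and> (\<integral>\<^sup>+x. \<phi> (ennreal (1 / r) * h x) \<partial>lebesgue) \<le> 1}"
    for h :: "'a \<Rightarrow> ennreal"
  have norm_eq: "orlicz_norm \<phi> h = Inf (radii h)" for h unfolding orlicz_norm_def radii_def ..
  have pair_bound: "orlicz_norm \<phi> W \<le> K * (p + q)" if "p \<in> radii U" "q \<in> radii V" for p q
    using that bound unfolding radii_def by auto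
  text \<open>Multiplication by the finite constant \<open>K\<close> is continuous, so it commutes with both infima.\<close>
  have Inf_commute: "K * (Inf P + q) = (INF p\<in>P. K * (p + q))" if "P \<noteq> {}" for P q
  proof (rule continuous_at_Inf_mono)
    show "mono (\<lambda>p. K * (p + q))" by (auto simp: mono_def intro: mult_left_mono add_right_mono)
    show "continuous (at_right (Inf P)) (\<lambda>p. K * (p + q))"
      unfolding continuous_within
      by (intro ennreal_tendsto_cmult tendsto_add tendsto_ident_at tendsto_const \<open>K < top\<close>[THEN less_imp_neq]
        \<open>K < top\<close>)
  qed (use that in auto)
  show ?thesis
  proof (cases "radii U = {} \<or> radii V = {}")
    case True
    then have "orlicz_norm \<phi> U + orlicz_norm \<phi> V = top" by (auto simp: norm_eq)
    with \<open>0 < K\<close> show ?thesis by (auto simp: ennreal_mult_top)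
  next
    case False
    have "orlicz_norm \<phi> W \<le> K * (Inf (radii U) + q)" if "q \<in> radii V" for q
    proof -
      have "orlicz_norm \<phi> W \<le> (INF p\<in>radii U. K * (p + q))"
        by (rule INF_greatest) (rule pair_bound[OF _ that])
      with False show ?thesis by (simp add: Inf_commute)
    qed
    then have "orlicz_norm \<phi> W \<le> (INF q\<in>radii V. K * (q + Inf (radii U)))"
      by (intro INF_greatest) (simp add: add.commute)
    also have "\<dots> = K * (Inf (radii V) + Inf (radii U))"
      using False by (intro Inf_commute[symmetric]) auto
    finally show ?thesis by (simp add: norm_eq add.commute)
  qed
qed

lemma orlicz_norm_le_of_nn_integral_le:
  fixes U V W :: "'a::euclidean_space \<Rightarrow> ennreal" and C \<kappa> :: real
  assumes young: "young \<phi>" and "1 \<le> C" "0 < \<kappa>"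
    and [measurable]: "U \<in> borel_measurable lebesgue" "V \<in> borel_measurable lebesgue"
    and bound: "\<And>r. 0 < r \<Longrightarrow> (\<integral>\<^sup>+x. \<phi> (ennreal (1 / r) * W x) \<partial>lebesgue) \<le>
      ennreal C * ((\<integral>\<^sup>+x. \<phi> (ennreal (\<kappa> / r) * U x) \<partial>lebesgue) + (\<integral>\<^sup>+x. \<phi> (ennreal (\<kappa> / r) * V x) \<partial>lebesgue))"
  shows "orlicz_norm \<phi> W \<le> ennreal (C * \<kappa>) * (orlicz_norm \<phi> U + orlicz_norm \<phi> V)"
proof (rule orlicz_norm_le_mult_add)
  show "0 < ennreal (C * \<kappa>)" "ennreal (C * \<kappa>) < top" using assms by auto
  fix r\<^sub>1 r\<^sub>2 :: real
  assume r: "0 < r\<^sub>1" "0 < r\<^sub>2"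
    and U: "(\<integral>\<^sup>+x. \<phi> (ennreal (1 / r\<^sub>1) * U x) \<partial>lebesgue) \<le> 1"
    and V: "(\<integral>\<^sup>+x. \<phi> (ennreal (1 / r\<^sub>2) * V x) \<partial>lebesgue) \<le> 1"
  define r where "r = C * \<kappa> * (r\<^sub>1 + r\<^sub>2)"
  have "0 < C" using \<open>1 \<le> C\<close> by simp
  have "0 < r" using assms r by (simp add: r_def)
  text \<open>Rescaling from an admissible radius \<open>\<rho>\<close> to \<open>r\<close> costs the share \<open>\<rho> / (C (r\<^sub>1 + r\<^sub>2)) \<le> 1\<close>, by convexity.\<close>
  have share: "(\<integral>\<^sup>+x. \<phi> (ennreal (\<kappa> / r) * h x) \<partial>lebesgue) \<le> ennreal (\<rho> / (C * (r\<^sub>1 + r\<^sub>2)))"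
    if "0 < \<rho>" "\<rho> \<le> r\<^sub>1 + r\<^sub>2" and [measurable]: "h \<in> borel_measurable lebesgue"
      and admissible: "(\<integral>\<^sup>+x. \<phi> (ennreal (1 / \<rho>) * h x) \<partial>lebesgue) \<le> 1" for \<rho> h
  proof -
    define l where "l = \<rho> / (C * (r\<^sub>1 + r\<^sub>2))"
    have "\<rho> \<le> C * (r\<^sub>1 + r\<^sub>2)"
      using \<open>\<rho> \<le> r\<^sub>1 + r\<^sub>2\<close> \<open>1 \<le> C\<close> r by (smt (verit) mult_le_cancel_right1)
    then have l: "0 \<le> l" "l \<le> 1"
      using that r \<open>1 \<le> C\<close> by (auto simp: l_def)
    have "ennreal (\<kappa> / r) * h x = ennreal l * (ennreal (1 / \<rho>) * h x)" for x
    proof -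
      have "\<kappa> / r = \<kappa> / (\<kappa> * (C * (r\<^sub>1 + r\<^sub>2)))" by (simp add: r_def ac_simps)
      also have "\<dots> = l * (1 / \<rho>)"
        using \<open>0 < \<kappa>\<close> \<open>0 < \<rho>\<close> by (simp add: l_def nonzero_divide_mult_cancel_left)
      finally have "\<kappa> / r = l * (1 / \<rho>)" .
      moreover have "0 \<le> 1 / \<rho>" using \<open>0 < \<rho>\<close> by simp
      ultimately show ?thesis using l(1) by (simp only: ennreal_mult mult.assoc)
    qed
    then have "(\<integral>\<^sup>+x. \<phi> (ennreal (\<kappa> / r) * h x) \<partial>lebesgue) \<le> ennreal l * (\<integral>\<^sup>+x. \<phi> (ennreal (1 / \<rho>) * h x) \<partial>lebesgue)"
      by (simp add: nn_integral_young_scale_le[OF young l])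
    also have "\<dots> \<le> ennreal l" using admissible by (simp add: mult_left_le)
    finally show ?thesis by (simp add: l_def)
  qed
  have "(\<integral>\<^sup>+x. \<phi> (ennreal (1 / r) * W x) \<partial>lebesgue) \<le>
      ennreal C * ((\<integral>\<^sup>+x. \<phi> (ennreal (\<kappa> / r) * U x) \<partial>lebesgue) + (\<integral>\<^sup>+x. \<phi> (ennreal (\<kappa> / r) * V x) \<partial>lebesgue))"
    using \<open>0 < r\<close> by (rule bound)
  also have "\<dots> \<le> ennreal C * (ennreal (r\<^sub>1 / (C * (r\<^sub>1 + r\<^sub>2))) + ennreal (r\<^sub>2 / (C * (r\<^sub>1 + r\<^sub>2))))"
    using r by (intro mult_left_mono add_mono share U V) auto
  also have "\<dots> = 1"
    using r \<open>1 \<le> C\<close> by (simp add: ennreal_mult[symmetric] ennreal_plus[symmetric] add_divide_distrib[symmetric] del: ennreal_plus)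
  finally have "orlicz_norm \<phi> W \<le> ennreal r" using \<open>0 < r\<close> by (rule orlicz_norm_le[rotated])
  also have "\<dots> = ennreal (C * \<kappa>) * (ennreal r\<^sub>1 + ennreal r\<^sub>2)"
    using assms r by (simp add: r_def ennreal_mult)
  finally show "orlicz_norm \<phi> W \<le> ennreal (C * \<kappa>) * (ennreal r\<^sub>1 + ennreal r\<^sub>2)" .
qed

lemma INF_max_zero_le_check: "(INF x. max (f x) 0) \<le> max (check f z) 0"
proof (cases "(INF x. max (f x) 0) \<le> 0")
  case False
  have "(INF x. max (f x) 0) \<le> f y" for y
    using INF_lower[of y UNIV "\<lambda>x. max (f x) 0"] False by (auto simp: max_def split: if_splits)
  then have "(INF x. max (f x) 0) \<le> (INF x. f x)" by (rule INF_greatest)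
  also have "\<dots> \<le> check f z" by (rule INF_le_check)
  finally show ?thesis by (simp add: max.coboundedI1)
qed (simp add: max.coboundedI2 order_trans)

lemma ereal_add_less_three_halves:
  fixes e \<zeta> :: ereal and m \<rho> :: real
  assumes "e \<le> ereal \<rho>" "2 * \<bar>m\<bar> < \<rho>" "ereal \<rho> < \<zeta>"
  shows "e + ereal m < ereal (3/2) * \<zeta>"
proof -
  have "e + ereal m \<le> ereal (\<rho> + m)" using assms(1) by (cases e) auto
  also have "\<dots> < ereal (3/2 * \<rho>)" using assms(2) by simp
  also have "\<dots> < ereal (3/2) * \<zeta>" using assms(3) by (cases \<zeta>) auto
  finally show ?thesis .
qed

lemma nonneg_of_INF_eq_ereal: "(\<And>x. 0 \<le> h x) \<Longrightarrow> (INF x. h x) = ereal c \<Longrightarrow> 0 \<le> c"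
  by (metis INF_greatest zero_ereal_def ereal_less_eq(3))

lemma check_shifts_nonneg:
  fixes f g :: "'a::euclidean_space \<Rightarrow> ereal" and \<mu> \<nu> :: real
  defines "m \<equiv> (\<mu> - \<nu>) / 2"
  assumes g_nonneg: "\<And>x. 0 \<le> g x"
    and \<mu>: "(INF x. max (f x) 0) = ereal \<mu>" and \<nu>: "(INF x. g x) = ereal \<nu>"
  shows "0 \<le> max (check f x) 0 - ereal m" and "0 \<le> check g x + ereal m"
proof -
  have "0 \<le> \<mu>" "0 \<le> \<nu>"
    using nonneg_of_INF_eq_ereal[OF _ \<mu>] nonneg_of_INF_eq_ereal[OF g_nonneg \<nu>] by simp_all
  then have "0 \<le> ereal \<mu> - ereal m" "0 \<le> ereal \<nu> + ereal m" by (simp_all add: m_def field_simps)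
  moreover have "ereal \<mu> \<le> max (check f x) 0" using INF_max_zero_le_check[of f x] \<mu> by simp
  then have "ereal \<mu> - ereal m \<le> max (check f x) 0 - ereal m" by (rule ereal_minus_mono) simp
  moreover have "ereal \<nu> + ereal m \<le> check g x + ereal m"
    using INF_le_check[of g x] \<nu> by (intro add_right_mono) simp
  ultimately show "0 \<le> max (check f x) 0 - ereal m" "0 \<le> check g x + ereal m"
    using order_trans by blast+
qed

text \<open>The sup-inf convolution never drops below \<open>max \<mu> \<nu> \<ge> 2 \<bar>m\<bar>\<close>, so at every relevant
  level \<open>\<rho>\<close> the shift by \<open>m\<close> is less than \<open>\<rho>/2\<close>.\<close>
lemma emeasure_sublevel_supconv_le_checks:
  fixes f g :: "'a::euclidean_space \<Rightarrow> ereal" and \<mu> \<nu> :: real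
  defines "m \<equiv> (\<mu> - \<nu>) / 2"
  assumes g_nonneg: "\<And>x. 0 \<le> g x"
    and \<mu>: "(INF x. max (f x) 0) = ereal \<mu>" and \<nu>: "(INF x. g x) = ereal \<nu>"
    and S: "S \<in> sets lborel" "S \<subseteq> {x. supconv f g x < \<zeta>}"
  shows "emeasure lborel S \<le> 2 ^ (DIM('a) - 1) *
    (emeasure lborel {x. max (check f x) 0 - ereal m < ereal (3/2) * \<zeta>} +
     emeasure lborel {x. check g x + ereal m < ereal (3/2) * \<zeta>})"
proof (rule emeasure_le_of_subset_sublevel_supconv[OF S])
  have "0 \<le> \<mu>" "0 \<le> \<nu>"
    using nonneg_of_INF_eq_ereal[OF _ \<mu>] nonneg_of_INF_eq_ereal[OF g_nonneg \<nu>] by simp_all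
  then have m: "2 * \<bar>m\<bar> \<le> max \<mu> \<nu>" by (auto simp: m_def)
  show "ereal (max \<mu> \<nu>) \<le> supconv f g x" for x
    using INF_le_supconv[of g f x] g_nonneg \<mu> \<nu> by simp
  show "{x. check f x \<le> ereal \<rho>} \<subseteq> {x. max (check f x) 0 - ereal m < ereal (3/2) * \<zeta>}"
    if "max \<mu> \<nu> < \<rho>" "ereal \<rho> < \<zeta>" for \<rho>
  proof
    fix x assume "x \<in> {x. check f x \<le> ereal \<rho>}"
    then have "max (check f x) 0 \<le> ereal \<rho>" using that \<open>0 \<le> \<mu>\<close> by auto
    from ereal_add_less_three_halves[OF this _ that(2), of "- m"] that m
    show "x \<in> {x. max (check f x) 0 - ereal m < ereal (3/2) * \<zeta>}" by (simp add: minus_ereal_def)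
  qed
  show "{x. check g x \<le> ereal \<rho>} \<subseteq> {x. check g x + ereal m < ereal (3/2) * \<zeta>}"
    if "max \<mu> \<nu> < \<rho>" "ereal \<rho> < \<zeta>" for \<rho>
    using ereal_add_less_three_halves[OF _ _ that(2), of _ m] that m by auto
qed measurable

lemma nn_integral_young_hinv_supconv_le:
  fixes f g :: "'a::euclidean_space \<Rightarrow> ereal" and \<mu> \<nu> :: real
  defines "m \<equiv> (\<mu> - \<nu>) / 2"
  assumes g_nonneg: "\<And>x. 0 \<le> g x"
    and \<mu>: "(INF x. max (f x) 0) = ereal \<mu>" and \<nu>: "(INF x. g x) = ereal \<nu>"
    and young: "young \<phi>" and "0 < r"
  shows "(\<integral>\<^sup>+x. \<phi> (ennreal (1 / r) * hinv (supconv f g x)) \<partial>lebesgue) \<le> ennreal (2 ^ (DIM('a) - 1)) *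
    ((\<integral>\<^sup>+x. \<phi> (ennreal (3/2 / r) * hinv (max (check f x) 0 - ereal m)) \<partial>lebesgue) +
     (\<integral>\<^sup>+x. \<phi> (ennreal (3/2 / r) * hinv (check g x + ereal m)) \<partial>lebesgue))"
proof -
  have [measurable]: "\<phi> \<in> borel_measurable borel" using young by (rule borel_measurable_young)
  define F where "F x = max (check f x) 0 - ereal m" for x
  define G where "G x = check g x + ereal m" for x
  have F_nonneg: "0 \<le> F x" and G_nonneg: "0 \<le> G x" for x
    unfolding F_def G_def m_def using check_shifts_nonneg[OF g_nonneg \<mu> \<nu>] by auto
  have "(\<integral>\<^sup>+x. \<phi> (ennreal (1 / r) * hinv (supconv f g x)) \<partial>lborel) \<le> ennreal (2 ^ (DIM('a) - 1)) *
    ((\<integral>\<^sup>+x. \<phi> (ennreal (3/2 / r) * hinv (F x)) \<partial>lborel) + (\<integral>\<^sup>+x. \<phi> (ennreal (3/2 / r) * hinv (G x)) \<partial>lborel))"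
  proof (rule lborel.nn_integral_le_of_superlevel_bound)
    fix t :: real and S
    assume S: "S \<in> sets lborel" "S \<subseteq> {x \<in> space lborel. ennreal t < \<phi> (ennreal (1 / r) * hinv (supconv f g x))}"
    obtain c where c: "\<And>v. ennreal t < \<phi> v \<longleftrightarrow> c < v" using young_superlevel_threshold[OF young, where t = "ennreal t"] by blast
    define \<zeta> where "\<zeta> = ereal (1 / r) * enn2ereal (inverse c)"
    have level: "ennreal t < \<phi> (ennreal a * hinv e) \<longleftrightarrow> e < ereal a * enn2ereal (inverse c)"
      if "0 \<le> e" "0 < a" for a e
      using less_mult_hinv_iff[OF that] by (simp add: c)
    have three_halves: "ereal (3/2) * \<zeta> = ereal (3/2 / r) * enn2ereal (inverse c)"
      by (simp add: \<zeta>_def mult.assoc[symmetric])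
    have "S \<subseteq> {x. supconv f g x < \<zeta>}"
    proof
      fix x assume "x \<in> S"
      then have "ennreal t < \<phi> (ennreal (1 / r) * hinv (supconv f g x))" using S(2) by auto
      moreover have "0 \<le> supconv f g x" using g_nonneg by (rule supconv_nonneg)
      ultimately show "x \<in> {x. supconv f g x < \<zeta>}" using level \<open>0 < r\<close> by (simp add: \<zeta>_def)
    qed
    with S(1) have "emeasure lborel S \<le> 2 ^ (DIM('a) - 1) *
      (emeasure lborel {x. F x < ereal (3/2) * \<zeta>} + emeasure lborel {x. G x < ereal (3/2) * \<zeta>})"
      unfolding F_def G_def m_def by (rule emeasure_sublevel_supconv_le_checks[OF g_nonneg \<mu> \<nu>])
    also have "{x. F x < ereal (3/2) * \<zeta>} = {x \<in> space lborel. ennreal t < \<phi> (ennreal (3/2 / r) * hinv (F x))}"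
      using level[OF F_nonneg] \<open>0 < r\<close> by (auto simp: three_halves)
    also have "{x. G x < ereal (3/2) * \<zeta>} = {x \<in> space lborel. ennreal t < \<phi> (ennreal (3/2 / r) * hinv (G x))}"
      using level[OF G_nonneg] \<open>0 < r\<close> by (auto simp: three_halves)
    finally show "emeasure lborel S \<le> ennreal (2 ^ (DIM('a) - 1)) *
      (emeasure lborel {x \<in> space lborel. ennreal t < \<phi> (ennreal (3/2 / r) * hinv (F x))} +
       emeasure lborel {x \<in> space lborel. ennreal t < \<phi> (ennreal (3/2 / r) * hinv (G x))})"
      by (simp add: ennreal_two_power)
  qed (simp_all add: F_def G_def)
  then show ?thesis by (simp add: nn_integral_completion F_def G_def)
qed

lemma orlicz_norm_hinv_supconv_le:
  fixes f g :: "'a::euclidean_space \<Rightarrow> ereal" and \<mu> \<nu> :: real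
  defines "m \<equiv> (\<mu> - \<nu>) / 2"
  assumes g_nonneg: "\<And>x. 0 \<le> g x"
    and \<mu>: "(INF x. max (f x) 0) = ereal \<mu>" and \<nu>: "(INF x. g x) = ereal \<nu>"
    and young: "young \<phi>"
  shows "orlicz_norm \<phi> (\<lambda>x. hinv (supconv f g x)) \<le>
    2 ^ DIM('a) * (orlicz_norm \<phi> (\<lambda>x. hinv (max (check f x) 0 - ereal m)) +
                   orlicz_norm \<phi> (\<lambda>x. hinv (check g x + ereal m)))"
proof -
  have meas: "(\<lambda>x. hinv (max (check f x) 0 - ereal m)) \<in> borel_measurable lebesgue"
    "(\<lambda>x. hinv (check g x + ereal m)) \<in> borel_measurable lebesgue"
    by (intro measurable_completion; measurable)+
  have "orlicz_norm \<phi> (\<lambda>x. hinv (supconv f g x)) \<le>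
    ennreal (2 ^ (DIM('a) - 1) * (3/2)) * (orlicz_norm \<phi> (\<lambda>x. hinv (max (check f x) 0 - ereal m)) +
                   orlicz_norm \<phi> (\<lambda>x. hinv (check g x + ereal m)))"
    using nn_integral_young_hinv_supconv_le[OF g_nonneg \<mu> \<nu> young]
    by (intro orlicz_norm_le_of_nn_integral_le[OF young _ _ meas]) (auto simp: m_def)
  also have "ennreal (2 ^ (DIM('a) - 1) * (3/2)) \<le> 2 ^ DIM('a)"
  proof -
    have "(2::real) ^ (DIM('a) - 1) * (3/2) \<le> 2 ^ (DIM('a) - 1) * 2" by simp
    also have "\<dots> = 2 ^ DIM('a)" using DIM_positive[where 'a='a] by (simp add: power_eq_if)
    finally show ?thesis by (metis ennreal_leI ennreal_two_power)
  qed
  finally show ?thesis by (simp add: mult_right_mono)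
qed

lemma INF_eq_ereal_of_nonneg:
  fixes h :: "'a \<Rightarrow> ereal"
  assumes "\<And>x. 0 \<le> h x" "h x\<^sub>0 \<noteq> \<infinity>"
  obtains c where "(INF x. h x) = ereal c"
proof -
  have "0 \<le> (INF x. h x)" using assms(1) by (rule INF_greatest)
  moreover have "(INF x. h x) \<le> h x\<^sub>0" by (rule INF_lower) simp
  ultimately show thesis using assms(2) that by (cases "INF x. h x") auto
qed

theorem corollary20:
  fixes f g :: "'a::euclidean_space \<Rightarrow> ereal"
  assumes "f \<in> borel_measurable borel" and "g \<in> borel_measurable borel"
    and "\<forall>x. g x \<ge> 0"
    and "\<exists>x. f x \<noteq> \<infinity>" and "\<exists>x. g x \<noteq> \<infinity>"
  shows "(\<forall>x. supconv f g x \<ge> 0) \<and>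
    (let m = ((INF x. max (f x) 0) - (INF x. g x)) / 2 in
     \<forall>\<phi>. young \<phi> \<longrightarrow>
       orlicz_norm \<phi> (\<lambda>x. hinv (supconv f g x))
         \<le> 2 ^ DIM('a) * (orlicz_norm \<phi> (\<lambda>x. hinv (max (check f x) 0 - m))
                         + orlicz_norm \<phi> (\<lambda>x. hinv (check g x + m))))"
proof -
  have g_nonneg: "\<And>x. 0 \<le> g x" using assms(3) by auto
  obtain x\<^sub>1 x\<^sub>2 where "f x\<^sub>1 \<noteq> \<infinity>" "g x\<^sub>2 \<noteq> \<infinity>" using assms(4,5) by blast
  moreover have "max (f x\<^sub>1) 0 \<noteq> \<infinity>" if "f x\<^sub>1 \<noteq> \<infinity>" using that by (simp add: max_def)
  ultimately obtain \<mu> \<nu> where \<mu>: "(INF x. max (f x) 0) = ereal \<mu>" and \<nu>: "(INF x. g x) = ereal \<nu>"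
    using INF_eq_ereal_of_nonneg[of "\<lambda>x. max (f x) 0" x\<^sub>1] INF_eq_ereal_of_nonneg[of g x\<^sub>2] g_nonneg
    by (smt (verit) max.cobounded2)
  have m: "((INF x. max (f x) 0) - (INF x. g x)) / 2 = ereal ((\<mu> - \<nu>) / 2)"
    by (simp add: \<mu> \<nu> divide_ereal_def)
  show ?thesis
    unfolding Let_def m
    using supconv_nonneg[of g f, OF g_nonneg] orlicz_norm_hinv_supconv_le[OF g_nonneg \<mu> \<nu>] by simp
qed

end
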